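(* Let $w_0\in W_0\subseteq W$, $r\in\mathbb Z_{\ge0}$, let $\overline{\mathfrak c}$ be a closed Weyl chamber in $V_{\mathscr A}$, let $x_1,\dots,x_r\in T/T^0$ with $\nu(x_i)\in\overline{\mathfrak c}$ for all $i$, let $n_i,m_i\in\mathbb Z_{\ge0}$ ($1\le i\le r$) with $m_i>0\Rightarrow n_i>0$, and let $\alpha\in\Phi$. Then at least one of the following holds: (1) $g_{w_0x_1^{n_1+m_1}\cdots x_r^{n_r+m_r}}(\alpha)=g_{w_0x_1^{n_1}\cdots x_r^{n_r}}(\alpha)$; (2) $g_{w_0x_1^{n_1+m_1}\cdots x_r^{n_r+m_r}}(\alpha)=g_{w_0x_1^{n_1}\cdots x_r^{n_r}}(\alpha)-\langle\nu(x_1^{m_1}\cdots x_r^{m_r}),w_0^{-1}\alpha\rangle$.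
   Context: Setting: $\mathfrak F$ a non-archimedean local field with valuation $\mathrm{val}_{\mathfrak F}$, $\mathbf G$ a connected split reductive group over $\mathfrak F$ with split maximal torus $\mathbf T$, connected centre $\mathbf C^\circ$, root system $\Phi$ with positive roots $\Phi^+$. $T=\mathbf T(\mathfrak F)$, $T^0$ its maximal compact subgroup, $N$ the normalizer of $T$, $W_0=N/T$, $W=N/T^0=(T/T^0)\rtimes W_0$ (with $W_0\subseteq W$ via the splitting coming from a fixed Chevalley system). $V_{\mathscr A}=(X_\ast(\mathbf T)/X_\ast(\mathbf C^\circ))\otimes\mathbb R$; $\nu:T/T^0\to V_{\mathscr A}$ satisfies $\langle\nu(t),\alpha\rangle=-\mathrm{val}_{\mathfrak F}(\alpha(t))$. Affine roots $\Phi_{\mathrm{aff}}=\Phi\times\mathbb Z$, positive ones $\Phi^+_{\mathrm{aff}}=(\Phi\times\mathbb Z_{\ge1})\cup(\Phi^+\times\{0\})$; $W$ acts by $(w_0t)\cdot(\alpha,h)=(w_0\alpha,h-\langle\nu(t),\alpha\rangle)$. For $w\in W$ and $\alpha\in\Phi$ define $g_w(\alpha)=\min\{m\in\mathbb Z:(\alpha,m)\in\Phi^+_{\mathrm{aff}}\cap w\Phi^+_{\mathrm{aff}}\}$. *)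

theory Defs
  imports "HOL-Analysis.Analysis" "HOL-Algebra.FiniteProduct"
begin

text \<open>The real vector space V_A carries a W_0-invariant inner product; we identify its
  dual with V_A via this inner product, so roots are vectors and the pairing
  between V_A and roots is the inner product.\<close>

definition root_refl :: "'v::real_inner \<Rightarrow> 'v \<Rightarrow> 'v" where
  "root_refl a v = v - (2 * (v \<bullet> a) / (a \<bullet> a)) *\<^sub>R a"

definition root_system :: "'v::euclidean_space set \<Rightarrow> bool" where
  "root_system \<Phi> \<longleftrightarrow> finite \<Phi> \<and> 0 \<notin> \<Phi> \<and> span \<Phi> = UNIV
     \<and> (\<forall>a\<in>\<Phi>. \<forall>b\<in>\<Phi>. root_refl a b \<in> \<Phi> \<and> 2 * (b \<bullet> a) / (a \<bullet> a) \<in> \<int>)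
     \<and> (\<forall>a\<in>\<Phi>. \<forall>c. c *\<^sub>R a \<in> \<Phi> \<longrightarrow> c = 1 \<or> c = -1)"

definition positive_system :: "'v::euclidean_space set \<Rightarrow> 'v set \<Rightarrow> bool" where
  "positive_system \<Phi> P \<longleftrightarrow>
     (\<exists>\<xi>. (\<forall>a\<in>\<Phi>. \<xi> \<bullet> a \<noteq> 0) \<and> P = {a\<in>\<Phi>. \<xi> \<bullet> a > 0})"

inductive_set weyl_group :: "'v::real_inner set \<Rightarrow> ('v \<Rightarrow> 'v) set" for \<Phi> where
  weyl_id: "id \<in> weyl_group \<Phi>"
| weyl_step: "w \<in> weyl_group \<Phi> \<Longrightarrow> a \<in> \<Phi> \<Longrightarrow> root_refl a \<circ> w \<in> weyl_group \<Phi>"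

definition closed_weyl_chamber :: "'v::euclidean_space set \<Rightarrow> 'v set \<Rightarrow> bool" where
  "closed_weyl_chamber \<Phi> C \<longleftrightarrow>
     (\<exists>\<xi>. (\<forall>a\<in>\<Phi>. \<xi> \<bullet> a \<noteq> 0) \<and>
        C = closure (connected_component_set (- (\<Union>a\<in>\<Phi>. {v. v \<bullet> a = 0})) \<xi>))"

text \<open>Affine roots Phi x Z are represented as pairs (a, h) with h a real number that is an
  integer; positive affine roots.\<close>
definition pos_aff :: "'v set \<Rightarrow> 'v set \<Rightarrow> ('v \<times> real) set" where
  "pos_aff \<Phi> P = {(a, real_of_int h) | a h. a \<in> \<Phi> \<and> (h \<ge> 1 \<or> (h = 0 \<and> a \<in> P))}"

text \<open>Action of w = w0 t (w0 in W_0, t in T/T^0) on affine roots: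
  (w0 t).(a,h) = (w0 a, h - <nu t, a>).\<close>
definition aff_act :: "('t \<Rightarrow> 'v::real_inner) \<Rightarrow> ('v \<Rightarrow> 'v) \<Rightarrow> 't \<Rightarrow> 'v \<times> real \<Rightarrow> 'v \<times> real" where
  "aff_act \<nu> w0 t ah = (w0 (fst ah), snd ah - \<nu> t \<bullet> fst ah)"

definition gW :: "'v::real_inner set \<Rightarrow> 'v set \<Rightarrow> ('t \<Rightarrow> 'v) \<Rightarrow> ('v \<Rightarrow> 'v) \<Rightarrow> 't \<Rightarrow> 'v \<Rightarrow> int" where
  "gW \<Phi> P \<nu> w0 t a =
     (LEAST m::int. (a, real_of_int m) \<in> pos_aff \<Phi> P \<inter> aff_act \<nu> w0 t ` pos_aff \<Phi> P)"

end

theory Submission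
  imports Defs
begin

text \<open>Put \<open>\<beta> = w\<^sub>0\<^sup>-\<^sup>1\<alpha>\<close> and \<open>t = x\<^sub>1\<^sup>k\<^sup>1 \<cdots> x\<^sub>r\<^sup>k\<^sup>r\<close>. The affine root \<open>(\<alpha>, h)\<close> lies in
  \<open>w\<^sub>0 t \<Phi>\<^sup>+\<^sub>a\<^sub>f\<^sub>f\<close> exactly when \<open>(\<beta>, h + \<langle>\<nu> t, \<beta>\<rangle>)\<close> is positive, so
  \<open>g\<^sub>w\<^sub>0\<^sub>t(\<alpha>) = max a (b - \<langle>\<nu> t, \<beta>\<rangle>)\<close> with \<open>a = [\<alpha> \<notin> \<Phi>\<^sup>+]\<close> and \<open>b = [\<beta> \<notin> \<Phi>\<^sup>+]\<close> in \<open>{0, 1}\<close>.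
  As the \<open>\<nu>(x\<^sub>i)\<close> lie in one closed chamber, the integers \<open>\<langle>\<nu>(x\<^sub>i), \<beta>\<rangle>\<close> share a sign. So
  if the extra exponents \<open>m\<^sub>i\<close> change the pairing by \<open>d \<noteq> 0\<close>, some \<open>x\<^sub>i\<close> with \<open>m\<^sub>i > 0\<close>, hence
  \<open>n\<^sub>i > 0\<close>, pairs nontrivially with \<open>\<beta>\<close>, and the pairing \<open>c\<close> for the exponents \<open>n\<^sub>i\<close> is a
  nonzero integer of the sign of \<open>d\<close>. For \<open>c \<ge> 1\<close> both maxima equal \<open>a\<close>; for \<open>c \<le> -1\<close> both
  are attained by the second entry, which drops by \<open>d\<close>.\<close>

lemma root_refl_root_refl:
  assumes "a \<noteq> (0::'v::real_inner)"
  shows "root_refl a (root_refl a v) = v"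
proof -
  define k where "k = 2 * (v \<bullet> a) / (a \<bullet> a)"
  have "a \<bullet> a \<noteq> 0" using assms by simp
  then have "(v - k *\<^sub>R a) \<bullet> a = - (v \<bullet> a)"
    by (simp add: k_def inner_diff_left algebra_simps)
  then have "2 * ((v - k *\<^sub>R a) \<bullet> a) / (a \<bullet> a) = - k" by (simp add: k_def)
  then show ?thesis unfolding root_refl_def k_def[symmetric] by simp
qed

lemma weyl_group_inj_image_roots:
  assumes "w \<in> weyl_group \<Phi>" "root_system \<Phi>"
  shows "inj w \<and> w ` \<Phi> = \<Phi>"
  using assms(1)
proof induction
  case weyl_id
  then show ?case by simp
next
  case (weyl_step w a)
  have "a \<noteq> 0" using \<open>a \<in> \<Phi>\<close> assms(2) unfolding root_system_def by auto
  then have refl_refl: "root_refl a (root_refl a v) = v" for v by (rule root_refl_root_refl)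
  have refl_roots: "root_refl a b \<in> \<Phi>" if "b \<in> \<Phi>" for b
    using \<open>a \<in> \<Phi>\<close> that assms(2) unfolding root_system_def by blast
  have "root_refl a ` \<Phi> = \<Phi>"
  proof
    show "\<Phi> \<subseteq> root_refl a ` \<Phi>"
      using refl_roots refl_refl by (metis image_eqI subsetI)
  qed (use refl_roots in blast)
  moreover have "inj (root_refl a)" using refl_refl by (metis injI)
  ultimately show ?case using weyl_step.IH by (metis image_comp inj_compose)
qed

lemma weyl_group_inv_into_root:
  assumes "w \<in> weyl_group \<Phi>" "root_system \<Phi>" "\<alpha> \<in> \<Phi>"
  shows "inv_into UNIV w \<alpha> \<in> \<Phi>" "w (inv_into UNIV w \<alpha>) = \<alpha>"
proof -
  have "inj w" and roots: "w ` \<Phi> = \<Phi>" using weyl_group_inj_image_roots[OF assms(1,2)] by blast+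
  moreover have "\<alpha> \<in> range w" using assms(3) roots by blast
  ultimately show "w (inv_into UNIV w \<alpha>) = \<alpha>" by (simp add: f_inv_into_f)
  then show "inv_into UNIV w \<alpha> \<in> \<Phi>" using assms(3) roots inj_image_mem_iff[OF \<open>inj w\<close>] by metis
qed

lemma additive_hom_one:
  fixes \<nu> :: "'x \<Rightarrow> 'v::real_vector"
  assumes "monoid X" "\<forall>s\<in>carrier X. \<forall>t\<in>carrier X. \<nu> (s \<otimes>\<^bsub>X\<^esub> t) = \<nu> s + \<nu> t"
  shows "\<nu> \<one>\<^bsub>X\<^esub> = 0"
  using assms by (metis add_cancel_right_right monoid.l_one monoid.one_closed)

lemma additive_hom_nat_pow:
  fixes \<nu> :: "'x \<Rightarrow> 'v::real_vector"
  assumes "monoid X" "\<forall>s\<in>carrier X. \<forall>t\<in>carrier X. \<nu> (s \<otimes>\<^bsub>X\<^esub> t) = \<nu> s + \<nu> t"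
    and "y \<in> carrier X"
  shows "\<nu> (y [^]\<^bsub>X\<^esub> (k::nat)) = real k *\<^sub>R \<nu> y"
proof (induction k)
  case 0
  then show ?case using additive_hom_one[OF assms(1,2)] by simp
next
  case (Suc k)
  have "y [^]\<^bsub>X\<^esub> k \<in> carrier X" using assms by (simp add: monoid.nat_pow_closed)
  then show ?case using Suc assms by (simp add: algebra_simps)
qed

lemma additive_hom_finprod:
  fixes \<nu> :: "'x \<Rightarrow> 'v::real_vector"
  assumes "comm_monoid X" "\<forall>s\<in>carrier X. \<forall>t\<in>carrier X. \<nu> (s \<otimes>\<^bsub>X\<^esub> t) = \<nu> s + \<nu> t"
    and "finite A" "f \<in> A \<rightarrow> carrier X"
  shows "\<nu> (finprod X f A) = (\<Sum>i\<in>A. \<nu> (f i))"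
  using assms(3,4)
proof (induction A rule: finite_induct)
  case empty
  then show ?case
    using additive_hom_one[OF comm_monoid.axioms(1)[OF assms(1)] assms(2)]
    by (simp add: comm_monoid.finprod_empty[OF assms(1)])
next
  case (insert a F)
  then have "f \<in> F \<rightarrow> carrier X" "f a \<in> carrier X" by auto
  then show ?case
    using insert assms(2)
    by (simp add: comm_monoid.finprod_insert[OF assms(1)] comm_monoid.finprod_closed[OF assms(1)])
qed

lemma additive_hom_finprod_pow_inner:
  fixes \<nu> :: "'x \<Rightarrow> 'v::real_inner" and e :: "nat \<Rightarrow> int" and k :: "nat \<Rightarrow> nat"
  assumes "comm_monoid X" "\<forall>s\<in>carrier X. \<forall>t\<in>carrier X. \<nu> (s \<otimes>\<^bsub>X\<^esub> t) = \<nu> s + \<nu> t"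
    and "finite I" "\<forall>i\<in>I. x i \<in> carrier X" "\<forall>i\<in>I. \<nu> (x i) \<bullet> \<beta> = of_int (e i)"
  shows "\<nu> (finprod X (\<lambda>i. x i [^]\<^bsub>X\<^esub> k i) I) \<bullet> \<beta> = of_int (\<Sum>i\<in>I. int (k i) * e i)"
proof -
  have mon: "monoid X" using assms(1) comm_monoid.axioms(1) by blast
  have "(\<lambda>i. x i [^]\<^bsub>X\<^esub> k i) \<in> I \<rightarrow> carrier X"
    using assms(4) mon by (auto simp: monoid.nat_pow_closed)
  then have "\<nu> (finprod X (\<lambda>i. x i [^]\<^bsub>X\<^esub> k i) I) = (\<Sum>i\<in>I. real (k i) *\<^sub>R \<nu> (x i))"
    using additive_hom_finprod[OF assms(1,2,3)] additive_hom_nat_pow[OF mon assms(2)] assms(4)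
    by simp
  then show ?thesis using assms(5) by (simp add: inner_sum_left)
qed

lemma gW_eq_max:
  assumes "inj w0" "\<beta> \<in> \<Phi>" "w0 \<beta> = \<alpha>" "\<alpha> \<in> \<Phi>" and pairing: "\<nu> t \<bullet> \<beta> = real_of_int c"
  shows "gW \<Phi> P \<nu> w0 t \<alpha> = max (if \<alpha> \<in> P then 0 else 1) ((if \<beta> \<in> P then 0 else 1) - c)"
proof -
  have positive: "(\<alpha>, real_of_int h) \<in> pos_aff \<Phi> P \<longleftrightarrow> (if \<alpha> \<in> P then 0 else 1) \<le> h" for h
    using assms(4) unfolding pos_aff_def by auto
  have translated_positive:
    "(\<alpha>, real_of_int h) \<in> aff_act \<nu> w0 t ` pos_aff \<Phi> P \<longleftrightarrow> (if \<beta> \<in> P then 0 else 1) - c \<le> h" for h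
  proof
    assume "(\<alpha>, real_of_int h) \<in> aff_act \<nu> w0 t ` pos_aff \<Phi> P"
    then obtain a h' where "a \<in> \<Phi>" "h' \<ge> 1 \<or> (h' = 0 \<and> a \<in> P)"
      and "(\<alpha>, real_of_int h) = (w0 a, real_of_int h' - \<nu> t \<bullet> a)"
      unfolding pos_aff_def aff_act_def by force
    moreover from this have "a = \<beta>" using assms(1,3) by (metis injD prod.inject)
    ultimately show "(if \<beta> \<in> P then 0 else 1) - c \<le> h" using pairing by auto
  next
    assume "(if \<beta> \<in> P then 0 else 1) - c \<le> h"
    then have "(\<beta>, real_of_int (h + c)) \<in> pos_aff \<Phi> P"
      using assms(2) unfolding pos_aff_def by (auto split: if_splits intro!: exI[of _ "h + c"])
    moreover have "aff_act \<nu> w0 t (\<beta>, real_of_int (h + c)) = (\<alpha>, real_of_int h)"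
      using assms(3) pairing unfolding aff_act_def by simp
    ultimately show "(\<alpha>, real_of_int h) \<in> aff_act \<nu> w0 t ` pos_aff \<Phi> P" by (metis image_eqI)
  qed
  have "(LEAST h::int. a \<le> h \<and> b \<le> h) = max a b" for a b
    by (rule Least_equality) auto
  then show ?thesis unfolding gW_def using positive translated_positive by simp
qed

lemma connected_inner_sign:
  assumes "connected S" "\<forall>v\<in>S. v \<bullet> \<beta> \<noteq> 0"
  shows "(\<forall>v\<in>S. 0 < v \<bullet> \<beta>) \<or> (\<forall>v\<in>S. v \<bullet> \<beta> < 0)"
proof (rule ccontr)
  assume "\<not> ?thesis"
  then obtain u v where "u \<in> S" "v \<in> S" "\<beta> \<bullet> u \<le> 0" "0 \<le> \<beta> \<bullet> v"
    by (auto simp: inner_commute not_less)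
  then show False
    using connected_ivt_hyperplane[OF assms(1)] assms(2) by (metis inner_commute)
qed

lemma closed_weyl_chamber_root_sign:
  assumes "closed_weyl_chamber \<Phi> C" "\<beta> \<in> \<Phi>"
  shows "(\<forall>v\<in>C. 0 \<le> v \<bullet> \<beta>) \<or> (\<forall>v\<in>C. v \<bullet> \<beta> \<le> 0)"
proof -
  obtain \<xi> where "\<forall>a\<in>\<Phi>. \<xi> \<bullet> a \<noteq> 0"
    and C: "C = closure (connected_component_set (- (\<Union>a\<in>\<Phi>. {v. v \<bullet> a = 0})) \<xi>)"
    using assms(1) unfolding closed_weyl_chamber_def by blast
  define S where "S = connected_component_set (- (\<Union>a\<in>\<Phi>. {v. v \<bullet> a = 0})) \<xi>"
  have "S \<subseteq> - (\<Union>a\<in>\<Phi>. {v. v \<bullet> a = 0})" unfolding S_def by (rule connected_component_subset)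
  then have "\<forall>v\<in>S. v \<bullet> \<beta> \<noteq> 0" using assms(2) by blast
  then have "S \<subseteq> {v. 0 \<le> v \<bullet> \<beta>} \<or> S \<subseteq> {v. v \<bullet> \<beta> \<le> 0}"
    using connected_inner_sign[of S \<beta>] unfolding S_def by fastforce
  moreover have "closed {v. 0 \<le> v \<bullet> \<beta>}" "closed {v. v \<bullet> \<beta> \<le> (0::real)}"
    by (intro closed_Collect_le continuous_intros)+
  ultimately have "C \<subseteq> {v. 0 \<le> v \<bullet> \<beta>} \<or> C \<subseteq> {v. v \<bullet> \<beta> \<le> 0}"
    unfolding C S_def[symmetric] by (meson closure_minimal)
  then show ?thesis by blast
qed

lemma weighted_sum_nonneg_cases:
  fixes e :: "nat \<Rightarrow> int" and n m :: "nat \<Rightarrow> nat"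
  assumes "finite I" "\<forall>i\<in>I. 0 \<le> e i" "\<forall>i\<in>I. 0 < m i \<longrightarrow> 0 < n i"
  shows "(\<Sum>i\<in>I. int (m i) * e i) = 0
    \<or> 1 \<le> (\<Sum>i\<in>I. int (n i) * e i) \<and> 0 \<le> (\<Sum>i\<in>I. int (m i) * e i)"
proof (cases "(\<Sum>i\<in>I. int (m i) * e i) = 0")
  case False
  then obtain i where i: "i \<in> I" "int (m i) * e i \<noteq> 0" by (meson sum.neutral)
  then have "0 < int (n i)" "0 < e i" using assms(2,3) by force+
  then have "1 \<le> int (n i) * e i" using mult_pos_pos[of "int (n i)" "e i"] by linarith
  also have "\<dots> \<le> (\<Sum>i\<in>I. int (n i) * e i)"
    using assms(1,2) i(1) by (intro member_le_sum) auto
  finally show ?thesis using assms(2) by (auto intro: sum_nonneg)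
qed simp

lemma weighted_sum_sign_cases:
  fixes e :: "nat \<Rightarrow> int" and n m :: "nat \<Rightarrow> nat"
  assumes "finite I" "(\<forall>i\<in>I. 0 \<le> e i) \<or> (\<forall>i\<in>I. e i \<le> 0)" "\<forall>i\<in>I. 0 < m i \<longrightarrow> 0 < n i"
  defines "c \<equiv> \<Sum>i\<in>I. int (n i) * e i" and "d \<equiv> \<Sum>i\<in>I. int (m i) * e i"
  shows "d = 0 \<or> 1 \<le> c \<and> 0 \<le> d \<or> c \<le> -1 \<and> d \<le> 0"
  using assms(2)
proof
  assume "\<forall>i\<in>I. 0 \<le> e i"
  then show ?thesis using weighted_sum_nonneg_cases[OF assms(1) _ assms(3)] c_def d_def by blast
next
  assume "\<forall>i\<in>I. e i \<le> 0"
  then have "\<forall>i\<in>I. 0 \<le> - e i" by simp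
  then show ?thesis using weighted_sum_nonneg_cases[OF assms(1) _ assms(3), of "\<lambda>i. - e i"]
    unfolding c_def d_def by (simp add: sum_negf) linarith
qed

lemma max_shift_dichotomy:
  fixes a b c d :: int
  assumes "\<bar>a - b\<bar> \<le> 1" "d = 0 \<or> 1 \<le> c \<and> 0 \<le> d \<or> c \<le> -1 \<and> d \<le> 0"
  shows "max a (b - (c + d)) = max a (b - c) \<or> max a (b - (c + d)) = max a (b - c) - d"
  using assms by auto

theorem mainTheorem3:
  fixes \<Phi> P :: "'v::euclidean_space set" and X :: "'x monoid" and \<nu> :: "'x \<Rightarrow> 'v"
    and w0 :: "'v \<Rightarrow> 'v" and r :: nat and C :: "'v set" and x :: "nat \<Rightarrow> 'x"
    and n m :: "nat \<Rightarrow> nat" and \<alpha> :: 'v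
  assumes "root_system \<Phi>" and "positive_system \<Phi> P"
    and "comm_group X"
    and "\<forall>s\<in>carrier X. \<forall>t\<in>carrier X. \<nu> (s \<otimes>\<^bsub>X\<^esub> t) = \<nu> s + \<nu> t"
    and "\<forall>t\<in>carrier X. \<forall>a\<in>\<Phi>. \<nu> t \<bullet> a \<in> \<int>"
    and "w0 \<in> weyl_group \<Phi>"
    and "closed_weyl_chamber \<Phi> C"
    and "\<forall>i\<in>{1..r}. x i \<in> carrier X \<and> \<nu> (x i) \<in> C"
    and "\<forall>i\<in>{1..r}. m i > 0 \<longrightarrow> n i > 0"
    and "\<alpha> \<in> \<Phi>"
  shows "gW \<Phi> P \<nu> w0 (finprod X (\<lambda>i. x i [^]\<^bsub>X\<^esub> (n i + m i)) {1..r}) \<alpha>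
           = gW \<Phi> P \<nu> w0 (finprod X (\<lambda>i. x i [^]\<^bsub>X\<^esub> n i) {1..r}) \<alpha>
      \<or> real_of_int (gW \<Phi> P \<nu> w0 (finprod X (\<lambda>i. x i [^]\<^bsub>X\<^esub> (n i + m i)) {1..r}) \<alpha>)
           = real_of_int (gW \<Phi> P \<nu> w0 (finprod X (\<lambda>i. x i [^]\<^bsub>X\<^esub> n i) {1..r}) \<alpha>)
             - \<nu> (finprod X (\<lambda>i. x i [^]\<^bsub>X\<^esub> m i) {1..r}) \<bullet> inv_into UNIV w0 \<alpha>"
proof -
  have "inj w0" using weyl_group_inj_image_roots[OF assms(6,1)] by blast
  define \<beta> where "\<beta> = inv_into UNIV w0 \<alpha>"
  have "\<beta> \<in> \<Phi>" "w0 \<beta> = \<alpha>"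
    unfolding \<beta>_def using weyl_group_inv_into_root[OF assms(6,1,10)] .
  define e where "e i = \<lfloor>\<nu> (x i) \<bullet> \<beta>\<rfloor>" for i
  have e: "\<forall>i\<in>{1..r}. \<nu> (x i) \<bullet> \<beta> = of_int (e i)"
    using assms(5,8) \<open>\<beta> \<in> \<Phi>\<close> unfolding e_def by simp
  have sign: "(\<forall>i\<in>{1..r}. 0 \<le> e i) \<or> (\<forall>i\<in>{1..r}. e i \<le> 0)"
    using closed_weyl_chamber_root_sign[OF assms(7) \<open>\<beta> \<in> \<Phi>\<close>] assms(8) e by force
  have pairing: "\<nu> (finprod X (\<lambda>i. x i [^]\<^bsub>X\<^esub> k i) {1..r}) \<bullet> \<beta>
      = of_int (\<Sum>i\<in>{1..r}. int (k i) * e i)" for k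
    using additive_hom_finprod_pow_inner[OF comm_group.axioms(1)[OF assms(3)] assms(4)]
      assms(8) e by blast
  define c where "c = (\<Sum>i\<in>{1..r}. int (n i) * e i)"
  define d where "d = (\<Sum>i\<in>{1..r}. int (m i) * e i)"
  define a :: int where "a = (if \<alpha> \<in> P then 0 else 1)"
  define b :: int where "b = (if \<beta> \<in> P then 0 else 1)"
  have gW_max: "gW \<Phi> P \<nu> w0 t \<alpha> = max a (b - k)" if "\<nu> t \<bullet> \<beta> = of_int k" for t k
    unfolding a_def b_def
    using gW_eq_max[where \<nu> = \<nu> and t = t, OF \<open>inj w0\<close> \<open>\<beta> \<in> \<Phi>\<close> \<open>w0 \<beta> = \<alpha>\<close> assms(10) that] .
  have sum_split: "(\<Sum>i\<in>{1..r}. int (n i + m i) * e i) = c + d"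
    unfolding c_def d_def by (simp add: sum.distrib algebra_simps)
  have "d = 0 \<or> 1 \<le> c \<and> 0 \<le> d \<or> c \<le> -1 \<and> d \<le> 0"
    using weighted_sum_sign_cases[OF finite_atLeastAtMost sign assms(9)] unfolding c_def d_def .
  then have "max a (b - (c + d)) = max a (b - c) \<or> max a (b - (c + d)) = max a (b - c) - d"
    by (rule max_shift_dichotomy[rotated]) (simp add: a_def b_def)
  moreover have
    "gW \<Phi> P \<nu> w0 (finprod X (\<lambda>i. x i [^]\<^bsub>X\<^esub> (n i + m i)) {1..r}) \<alpha> = max a (b - (c + d))"
    using gW_max pairing sum_split by metis
  moreover have "gW \<Phi> P \<nu> w0 (finprod X (\<lambda>i. x i [^]\<^bsub>X\<^esub> n i) {1..r}) \<alpha> = max a (b - c)"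
    using gW_max pairing unfolding c_def by metis
  moreover have
    "\<nu> (finprod X (\<lambda>i. x i [^]\<^bsub>X\<^esub> m i) {1..r}) \<bullet> inv_into UNIV w0 \<alpha> = of_int d"
    using pairing unfolding d_def \<beta>_def .
  ultimately show ?thesis by auto
qed

end
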